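(* Let $q,m\ge0$, $k\ge1$ be integers, $\zeta$ a root of unity with $\zeta^{3^k-1}=1$, and let $(c,a)\in Z(q,m,\zeta)$ be such that $Q_{c,a}=\zeta P^m_{c,a}+(1-\zeta)\frac c2$ commutes with $P^k_{c,a}$. Then $$Q_{c,a}\big(\mathrm{Crit}(P^{k+m}_{c,a})\big)=Q_{c,a}\big(\mathrm{Crit}(P^m_{c,a})\big)\cup\mathrm{Crit}(P^k_{c,a}).$$
   Context: $P_{c,a}(z)=\frac13z^3-\frac c2z^2+a^3$, $(c,a)\in\mathbb{C}^2$, with critical points $c_0=0$, $c_1=c$; $\mathrm{Crit}(R)$ denotes the set of critical points of a polynomial $R$ (with $\mathrm{Crit}(P^0)=\emptyset$). For integers $q,m\ge0$ and a root of unity $\zeta$, $Z(q,m,\zeta)$ is the set of $(c,a)$ such that $Q_{c,a}:=\zeta P^m_{c,a}+(1-\zeta)\frac c2$ commutes with all iterates $P^j_{c,a}$ ($j\ge1$) with $\zeta^{3^j}=\zeta$, and either $Q_{c,a}(P^q_{c,a}(c_0))=P^q_{c,a}(c_1)$ or $Q_{c,a}(P^q_{c,a}(c_1))=P^q_{c,a}(c_0)$. *)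

theory Defs
  imports "HOL-Computational_Algebra.Polynomial"
begin

definition Ppoly :: "complex \<Rightarrow> complex \<Rightarrow> complex poly" where
  "Ppoly c a = [:a ^ 3, 0, - c / 2, 1 / 3:]"

definition Piter :: "complex \<Rightarrow> complex \<Rightarrow> nat \<Rightarrow> complex poly" where
  "Piter c a n = ((\<lambda>p. pcompose (Ppoly c a) p) ^^ n) [:0, 1:]"

text \<open>Critical points of a polynomial: zeros of its derivative.
  (For P^0 = z the derivative is 1, so Crit(P^0) is empty.)\<close>
definition Crit :: "complex poly \<Rightarrow> complex set" where
  "Crit R = {z. poly (pderiv R) z = 0}"

definition Qmap :: "complex \<Rightarrow> nat \<Rightarrow> complex \<Rightarrow> complex \<Rightarrow> complex \<Rightarrow> complex" where
  "Qmap \<zeta> m c a z = \<zeta> * poly (Piter c a m) z + (1 - \<zeta>) * (c / 2)"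

definition commutes :: "(complex \<Rightarrow> complex) \<Rightarrow> (complex \<Rightarrow> complex) \<Rightarrow> bool" where
  "commutes f g \<longleftrightarrow> f \<circ> g = g \<circ> f"

definition root_of_unity :: "complex \<Rightarrow> bool" where
  "root_of_unity \<zeta> \<longleftrightarrow> (\<exists>n>0. \<zeta> ^ n = 1)"

text \<open>The set Z(q,m,zeta); critical points c_0 = 0, c_1 = c.\<close>
definition Zset :: "nat \<Rightarrow> nat \<Rightarrow> complex \<Rightarrow> (complex \<times> complex) set" where
  "Zset q m \<zeta> = {(c, a).
     (\<forall>j\<ge>1. \<zeta> ^ (3 ^ j) = \<zeta> \<longrightarrow> commutes (Qmap \<zeta> m c a) (poly (Piter c a j))) \<and>
     (Qmap \<zeta> m c a (poly (Piter c a q) 0) = poly (Piter c a q) c \<or>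
      Qmap \<zeta> m c a (poly (Piter c a q) c) = poly (Piter c a q) 0)}"

end

theory Submission
  imports Defs "HOL-Computational_Algebra.Fundamental_Theorem_Algebra"
begin

text \<open>Write \<open>Q = L \<circ> P\<^sup>m\<close> with the affine map \<open>L w = \<zeta> w + (1 - \<zeta>) c/2\<close>. Since \<open>P\<^sup>m\<close> is
  surjective and commutes with \<open>P\<^sup>k\<close>, the commutation of \<open>Q\<close> with \<open>P\<^sup>k\<close> descends to \<open>L\<close>;
  differentiating \<open>L \<circ> P\<^sup>k = P\<^sup>k \<circ> L\<close> shows that \<open>L\<close> permutes \<open>Crit(P\<^sup>k)\<close>. Finally
  \<open>Crit(P\<^sup>k \<circ> P\<^sup>m) = Crit(P\<^sup>m) \<union> (P\<^sup>m)\<^sup>-\<^sup>1(Crit(P\<^sup>k))\<close>, and applying \<open>Q\<close> gives the claim.\<close>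

lemma surj_poly_complex:
  fixes p :: "complex poly"
  assumes "degree p \<noteq> 0"
  shows "surj (poly p)"
  unfolding surj_def
proof
  fix w
  have "\<exists>z. poly (p + [:- w:]) z = 0"
  proof (rule fundamental_theorem_of_algebra_alt, clarify)
    fix b assume "p + [:- w:] = [:b:]"
    then have "p = [:b:] - [:- w:]"
      by (simp only: eq_diff_eq)
    then have "degree p = 0"
      using degree_diff_le[of "[:b:]" 0 "[:- w:]"] by simp
    with assms show False ..
  qed
  then show "\<exists>z. w = poly p z"
    by auto
qed

lemma Crit_pcompose:
  fixes p q :: "complex poly"
  shows "Crit (p \<circ>\<^sub>p q) = Crit q \<union> poly q -` Crit p"
  by (auto simp: Crit_def pderiv_pcompose poly_pcompose)

lemma affine_image_Crit_eq:
  fixes p :: "complex poly"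
  assumes "\<zeta> \<noteq> 0" and commute: "[:b, \<zeta>:] \<circ>\<^sub>p p = p \<circ>\<^sub>p [:b, \<zeta>:]"
  shows "poly [:b, \<zeta>:] ` Crit p = Crit p"
proof -
  let ?L = "[:b, \<zeta>:]"
  have "\<zeta> * poly (pderiv p) w = poly (pderiv p) (poly ?L w) * \<zeta>" for w
    using arg_cong[OF commute, of "\<lambda>r. poly (pderiv r) w"]
    by (simp add: pderiv_pcompose poly_pcompose pderiv_pCons)
  then have invariant: "poly (pderiv p) (poly ?L w) = poly (pderiv p) w" for w
    using \<open>\<zeta> \<noteq> 0\<close> by (metis mult.commute mult_left_cancel)
  have "surj (poly ?L)"
    using \<open>\<zeta> \<noteq> 0\<close> by (intro surj_poly_complex) simp
  moreover have "poly ?L -` Crit p = Crit p"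
    using invariant by (simp add: Crit_def)
  ultimately show ?thesis
    by (metis surj_image_vimage_eq)
qed

lemma commute_through_surj:
  assumes "surj f" and "f \<circ> g = g \<circ> f" and "(h \<circ> f) \<circ> g = g \<circ> (h \<circ> f)"
  shows "h \<circ> g = g \<circ> h"
proof
  fix w
  obtain z where "w = f z" using \<open>surj f\<close> by blast
  moreover have "f (g z) = g (f z)" and "h (f (g z)) = g (h (f z))"
    using fun_cong[OF assms(2), of z] fun_cong[OF assms(3), of z] by simp_all
  ultimately show "(h \<circ> g) w = (g \<circ> h) w"
    by simp
qed

lemma Piter_0: "Piter c a 0 = [:0, 1:]"
  by (simp add: Piter_def)

lemma Piter_Suc: "Piter c a (Suc n) = Ppoly c a \<circ>\<^sub>p Piter c a n"
  by (simp add: Piter_def)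

lemma Piter_add: "Piter c a (k + m) = Piter c a k \<circ>\<^sub>p Piter c a m"
  by (induction k) (simp_all add: Piter_0 Piter_Suc pcompose_pCons pcompose_assoc)

lemma poly_Piter_commute: "poly (Piter c a m) \<circ> poly (Piter c a k) = poly (Piter c a k) \<circ> poly (Piter c a m)"
  unfolding fun_eq_iff comp_def poly_pcompose[symmetric] Piter_add[symmetric]
  by (simp add: add.commute)

lemma surj_poly_Piter: "surj (poly (Piter c a n))"
proof (induction n)
  case 0
  then show ?case by (simp add: Piter_0 surj_def)
next
  case (Suc n)
  have "poly (Piter c a (Suc n)) = poly (Ppoly c a) \<circ> poly (Piter c a n)"
    by (simp add: Piter_Suc fun_eq_iff poly_pcompose)
  moreover have "surj (poly (Ppoly c a))"
    by (intro surj_poly_complex) (simp add: Ppoly_def)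
  ultimately show ?case
    using Suc by (simp only: comp_surj)
qed

theorem lemma7p2:
  fixes q m k :: nat and \<zeta> c a :: complex
  assumes "k \<ge> 1"
    and "root_of_unity \<zeta>"
    and "\<zeta> ^ (3 ^ k - 1) = 1"
    and "(c, a) \<in> Zset q m \<zeta>"
    and "commutes (Qmap \<zeta> m c a) (poly (Piter c a k))"
  shows "Qmap \<zeta> m c a ` Crit (Piter c a (k + m))
       = Qmap \<zeta> m c a ` Crit (Piter c a m) \<union> Crit (Piter c a k)"
proof -
  define L where "L = [:(1 - \<zeta>) * (c / 2), \<zeta>:]"
  let ?Pk = "Piter c a k" and ?Pm = "Piter c a m"
  have "\<zeta> \<noteq> 0"
    using assms(2) by (auto simp: root_of_unity_def power_0_left)
  have Q: "Qmap \<zeta> m c a = poly L \<circ> poly ?Pm"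
    by (simp add: fun_eq_iff Qmap_def L_def algebra_simps)
  have "poly L \<circ> poly ?Pk = poly ?Pk \<circ> poly L"
    using assms(5) unfolding Q commutes_def
    by (rule commute_through_surj[OF surj_poly_Piter poly_Piter_commute])
  then have "L \<circ>\<^sub>p ?Pk = ?Pk \<circ>\<^sub>p L"
    by (simp add: poly_eq_poly_eq_iff[symmetric] fun_eq_iff poly_pcompose)
  then have L_Crit: "poly L ` Crit ?Pk = Crit ?Pk"
    using \<open>\<zeta> \<noteq> 0\<close> unfolding L_def by (rule affine_image_Crit_eq[rotated])
  have "Qmap \<zeta> m c a ` Crit (Piter c a (k + m))
      = Qmap \<zeta> m c a ` Crit ?Pm \<union> poly L ` poly ?Pm ` (poly ?Pm -` Crit ?Pk)"
    by (simp only: Q Piter_add Crit_pcompose image_Un image_comp)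
  also have "\<dots> = Qmap \<zeta> m c a ` Crit ?Pm \<union> Crit ?Pk"
    by (simp only: surj_image_vimage_eq[OF surj_poly_Piter] L_Crit)
  finally show ?thesis .
qed

end
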